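(* Let $\alpha=\alpha(s)$ be a timelike unit speed curve in $\mathbb{S}_1^3$ with geodesic curvature $\kappa_g>0$ and geodesic torsion $\tau_g\neq0$. Then $\alpha$ is congruent to a timelike rectifying curve if and only if $$\frac{\tau_g}{\kappa_g}(s)=\mu_1\sinh(s+s_0)+\mu_2\cosh(s+s_0)$$ for some constants $\mu_1,\mu_2,s_0$ with $\mu_2^2-\mu_1^2<1$.
   Context: Minkowski 4-space $\mathbb{R}_1^4$ is $\mathbb{R}^4$ with $\langle x,y\rangle=-x_1y_1+x_2y_2+x_3y_3+x_4y_4$, $\|x\|=\sqrt{|\langle x,x\rangle|}$. De Sitter 3-space is $\mathbb{S}_1^3=\{x:\langle x,x\rangle=1\}$ with Levi-Civita connection $\overline\nabla$. For a timelike unit speed curve $\alpha(s)$ in $\mathbb{S}_1^3$ ($\langle\alpha',\alpha'\rangle=-1$): $T_\alpha=\alpha'$, $\kappa_g=\|T_\alpha'-\alpha\|$, $N_\alpha=(T_\alpha'-\alpha)/\kappa_g$ (spacelike), $B_\alpha=\alpha\times T_\alpha\times N_\alpha$ (the formal determinant with first row $(-e_1,e_2,e_3,e_4)$ and rows $\alpha,T_\alpha,N_\alpha$), $\tau_g=\langle\overline\nabla_{T_\alpha}N_\alpha,B_\alpha\rangle=\det(\alpha,\alpha',\alpha'',\alpha''')/\kappa_g^2$; Frenet equations $T_\alpha'=\alpha+\kappa_gN_\alpha$, $N_\alpha'=\kappa_gT_\alpha+\tau_gB_\alpha$, $B_\alpha'=-\tau_gN_\alpha$. A timelike non-geodesic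 curve $\alpha$ is a timelike rectifying curve if there is a fixed point $p\in\mathbb{S}_1^3$ with $\pm p\notin\mathrm{Im}(\alpha)$ such that for every $s$ the tangent vector at $\alpha(s)$ of the geodesic of $\mathbb{S}_1^3$ joining $p$ and $\alpha(s)$ is pseudo-orthogonal to $N_\alpha(s)$ (i.e. this geodesic is pseudo-orthogonal to the principal normal geodesic $\cos(t)\alpha(s)+\sin(t)N_\alpha(s)$ at $\alpha(s)$). Congruence is by isometries of $\mathbb{S}_1^3$. *)

theory Defs
  imports "HOL-Analysis.Analysis"
begin

definition mink :: "real^4 \<Rightarrow> real^4 \<Rightarrow> real" where
  "mink x y = - (x$1 * y$1) + x$2 * y$2 + x$3 * y$3 + x$4 * y$4"

definition mnorm :: "real^4 \<Rightarrow> real" where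
  "mnorm x = sqrt \<bar>mink x x\<bar>"

text \<open>A smooth curve on the open interval I together with the family of all its
  derivatives: d 0 = the curve, d (Suc k) = derivative of d k on I.\<close>

definition deriv_family :: "real set \<Rightarrow> (nat \<Rightarrow> real \<Rightarrow> real^4) \<Rightarrow> bool" where
  "deriv_family I d \<longleftrightarrow>
     (\<forall>k. \<forall>s\<in>I. (d k has_vector_derivative d (Suc k) s) (at s))"

definition timelike_unit_dS :: "real set \<Rightarrow> (nat \<Rightarrow> real \<Rightarrow> real^4) \<Rightarrow> bool" where
  "timelike_unit_dS I d \<longleftrightarrow> deriv_family I d \<and>
     (\<forall>s\<in>I. mink (d 0 s) (d 0 s) = 1 \<and> mink (d 1 s) (d 1 s) = -1)"

definition kappa_g :: "(nat \<Rightarrow> real \<Rightarrow> real^4) \<Rightarrow> real \<Rightarrow> real" where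
  "kappa_g d s = mnorm (d 2 s - d 0 s)"

definition normal_g :: "(nat \<Rightarrow> real \<Rightarrow> real^4) \<Rightarrow> real \<Rightarrow> real^4" where
  "normal_g d s = (1 / kappa_g d s) *\<^sub>R (d 2 s - d 0 s)"

definition tau_g :: "(nat \<Rightarrow> real \<Rightarrow> real^4) \<Rightarrow> real \<Rightarrow> real" where
  "tau_g d s = det (vector [d 0 s, d 1 s, d 2 s, d 3 s] :: real^4^4) / (kappa_g d s)^2"

text \<open>Tangent direction at x of the geodesic of de Sitter space joining p and x:
  the pseudo-orthogonal projection of p onto the tangent space at x.\<close>

definition geod_tangent :: "real^4 \<Rightarrow> real^4 \<Rightarrow> real^4" where
  "geod_tangent p x = p - mink p x *\<^sub>R x"

definition timelike_rectifying :: "real set \<Rightarrow> (real \<Rightarrow> real^4) \<Rightarrow> bool" where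
  "timelike_rectifying I \<beta> \<longleftrightarrow>
     (\<exists>d. d 0 = \<beta> \<and> timelike_unit_dS I d \<and> (\<forall>s\<in>I. kappa_g d s > 0) \<and>
        (\<exists>p. mink p p = 1 \<and> (\<forall>s\<in>I. \<beta> s \<noteq> p \<and> \<beta> s \<noteq> - p) \<and>
             (\<forall>s\<in>I. mink (geod_tangent p (\<beta> s)) (normal_g d s) = 0)))"

text \<open>Isometries of de Sitter space: (restrictions of) linear maps of R^4_1
  preserving the Minkowski inner product.\<close>

definition lorentz_iso :: "(real^4 \<Rightarrow> real^4) \<Rightarrow> bool" where
  "lorentz_iso A \<longleftrightarrow> linear A \<and> (\<forall>x y. mink (A x) (A y) = mink x y)"

definition congruent_to_rectifying :: "real set \<Rightarrow> (real \<Rightarrow> real^4) \<Rightarrow> bool" where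
  "congruent_to_rectifying I \<alpha> \<longleftrightarrow>
     (\<exists>A. lorentz_iso A \<and> timelike_rectifying I (A \<circ> \<alpha>))"

end

theory Submission
  imports Defs
begin

text \<open>
Along a timelike curve \<open>\<alpha>\<close> in de Sitter space with \<open>\<kappa>\<^sub>g > 0\<close> the pseudo-orthonormal frame
\<open>(\<alpha>, T, N, B)\<close> satisfies \<open>\<alpha>' = T\<close>, \<open>T' = \<alpha> + \<kappa>\<^sub>g N\<close>, \<open>N' = \<kappa>\<^sub>g T + \<tau>\<^sub>g B\<close>, \<open>B' = -\<tau>\<^sub>g N\<close>.
For a unit point \<open>p\<close>, the rectifying condition says exactly \<open>\<langle>p, N\<rangle> = 0\<close>. Then
\<open>h = \<langle>p, \<alpha>\<rangle>\<close> and \<open>g = \<langle>p, T\<rangle>\<close> satisfy \<open>h' = g\<close>, \<open>g' = h\<close>, so they are combinations of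
\<open>sinh\<close> and \<open>cosh\<close>; \<open>K = \<langle>p, B\<rangle>\<close> is constant, and differentiating \<open>\<langle>p, N\<rangle> = 0\<close> gives
\<open>\<kappa>\<^sub>g g + \<tau>\<^sub>g K = 0\<close>, hence \<open>\<tau>\<^sub>g/\<kappa>\<^sub>g = -g/K\<close>. The constraint \<open>\<mu>\<^sub>2\<^sup>2 - \<mu>\<^sub>1\<^sup>2 < 1\<close> is the
normalisation \<open>1 = \<langle>p, p\<rangle> = h\<^sup>2 - g\<^sup>2 + K\<^sup>2\<close>, which also forces \<open>K \<noteq> 0\<close> and thus \<open>\<plusminus>p \<notin> \<alpha>\<close>.
Conversely, with \<open>f = \<tau>\<^sub>g/\<kappa>\<^sub>g\<close> the point \<open>c (B + f T - f' \<alpha>)\<close> is constant along the curve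
and is a rectifying point for a suitable \<open>c > 0\<close>. Lorentz isometries carry the frame of
\<open>\<alpha>\<close> to that of its image, so congruence reduces to the curve itself.
\<close>

section \<open>Minkowski inner product\<close>

lemma mink_commute: "mink x y = mink y x"
  by (simp add: mink_def algebra_simps)

lemma mink_add_left: "mink (x + y) z = mink x z + mink y z"
  and mink_add_right: "mink x (y + z) = mink x y + mink x z"
  and mink_diff_left: "mink (x - y) z = mink x z - mink y z"
  and mink_diff_right: "mink x (y - z) = mink x y - mink x z"
  and mink_scaleR_left: "mink (c *\<^sub>R x) y = c * mink x y"
  and mink_scaleR_right: "mink x (c *\<^sub>R y) = c * mink x y"
  and mink_minus_left: "mink (- x) y = - mink x y"
  and mink_minus_right: "mink x (- y) = - mink x y"
  and mink_zero_left: "mink 0 y = 0"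
  and mink_zero_right: "mink x 0 = 0"
  by (simp_all add: mink_def algebra_simps)

lemmas mink_simps = mink_add_left mink_add_right mink_diff_left mink_diff_right
  mink_scaleR_left mink_scaleR_right mink_minus_left mink_minus_right mink_zero_left mink_zero_right

lemma bounded_bilinear_mink: "bounded_bilinear mink"
  unfolding bilinear_conv_bounded_bilinear[symmetric] bilinear_def
  by (auto intro!: linearI simp: mink_simps)

lemma mink_has_real_derivative:
  assumes "(f has_vector_derivative f') (at t)" and "(g has_vector_derivative g') (at t)"
  shows "((\<lambda>t. mink (f t) (g t)) has_real_derivative mink f' (g t) + mink (f t) g') (at t)"
  using bounded_bilinear.has_vector_derivative[OF bounded_bilinear_mink assms]
  by (simp add: has_real_derivative_iff_has_vector_derivative add.commute)

lemma mink_nondegenerate: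
  assumes "\<And>y. mink x y = 0"
  shows "x = 0"
proof -
  have "x $ 1 = 0" "x $ 2 = 0" "x $ 3 = 0" "x $ 4 = 0"
    using assms[of "axis 1 1"] assms[of "axis 2 1"] assms[of "axis 3 1"] assms[of "axis 4 1"]
    by (simp_all add: mink_def axis_def)
  then show ?thesis
    by (simp add: vec_eq_iff forall_4)
qed

lemma mink_orthogonal_timelike_nonneg:
  assumes "mink u u < 0" and "mink v u = 0"
  shows "mink v v \<ge> 0"
proof -
  define S where "S = (v$2)^2 + (v$3)^2 + (v$4)^2"
  define R where "R = (u$2)^2 + (u$3)^2 + (u$4)^2"
  define X where "X = v$2 * u$2 + v$3 * u$3 + v$4 * u$4"
  have R_less: "R < (u$1)^2"
    using assms(1) by (simp add: mink_def R_def power2_eq_square)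
  have "v$1 * u$1 = X"
    using assms(2) by (simp add: mink_def X_def)
  then have "(v$1)^2 * (u$1)^2 = X^2"
    by (simp add: power_mult_distrib[symmetric])
  also have "X^2 \<le> S * R"
  proof -
    have "S * R - X^2 =
        (v$2 * u$3 - v$3 * u$2)^2 + (v$2 * u$4 - v$4 * u$2)^2 + (v$3 * u$4 - v$4 * u$3)^2"
      unfolding S_def R_def X_def power2_eq_square by (simp add: algebra_simps)
    then show ?thesis
      by (smt (verit) zero_le_power2)
  qed
  also have "S * R \<le> S * (u$1)^2"
    using R_less by (simp add: S_def mult_left_mono)
  finally have "(v$1)^2 \<le> S"
    using R_less by (smt (verit) mult_right_le_imp_le zero_le_power2 R_def)
  then show ?thesis
    by (simp add: mink_def S_def power2_eq_square)
qed

section \<open>Four-by-four determinants and the ternary cross product\<close>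

lemma vector_4 [simp]:
  "(vector [x, y, z, w] :: ('a::zero)^4) $ 1 = x"
  "(vector [x, y, z, w] :: ('a::zero)^4) $ 2 = y"
  "(vector [x, y, z, w] :: ('a::zero)^4) $ 3 = z"
  "(vector [x, y, z, w] :: ('a::zero)^4) $ 4 = w"
  unfolding vector_def by simp_all

lemma det_4:
  "det (A::'a::comm_ring_1^4^4) =
      A$1$1 * A$2$2 * A$3$3 * A$4$4 - A$1$1 * A$2$2 * A$3$4 * A$4$3
    - A$1$1 * A$2$3 * A$3$2 * A$4$4 + A$1$1 * A$2$3 * A$3$4 * A$4$2
    + A$1$1 * A$2$4 * A$3$2 * A$4$3 - A$1$1 * A$2$4 * A$3$3 * A$4$2
    - A$1$2 * A$2$1 * A$3$3 * A$4$4 + A$1$2 * A$2$1 * A$3$4 * A$4$3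
    + A$1$2 * A$2$3 * A$3$1 * A$4$4 - A$1$2 * A$2$3 * A$3$4 * A$4$1
    - A$1$2 * A$2$4 * A$3$1 * A$4$3 + A$1$2 * A$2$4 * A$3$3 * A$4$1
    + A$1$3 * A$2$1 * A$3$2 * A$4$4 - A$1$3 * A$2$1 * A$3$4 * A$4$2
    - A$1$3 * A$2$2 * A$3$1 * A$4$4 + A$1$3 * A$2$2 * A$3$4 * A$4$1
    + A$1$3 * A$2$4 * A$3$1 * A$4$2 - A$1$3 * A$2$4 * A$3$2 * A$4$1
    - A$1$4 * A$2$1 * A$3$2 * A$4$3 + A$1$4 * A$2$1 * A$3$3 * A$4$2
    + A$1$4 * A$2$2 * A$3$1 * A$4$3 - A$1$4 * A$2$2 * A$3$3 * A$4$1
    - A$1$4 * A$2$3 * A$3$1 * A$4$2 + A$1$4 * A$2$3 * A$3$2 * A$4$1"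
proof -
  have f1234: "finite {2::4, 3, 4}" "1 \<notin> {2::4, 3, 4}" by auto
  have f234: "finite {3::4, 4}" "2 \<notin> {3::4, 4}" by auto
  have f34: "finite {4::4}" "3 \<notin> {4::4}" by auto
  show ?thesis
    unfolding det_def UNIV_4
    unfolding sum_over_permutations_insert[OF f1234]
    unfolding sum_over_permutations_insert[OF f234]
    unfolding sum_over_permutations_insert[OF f34]
    unfolding permutes_sing
    by (simp add: sign_swap_id permutation_swap_id permutation_compose sign_compose
        swap_id_eq algebra_simps)
qed

definition det4 :: "real^4 \<Rightarrow> real^4 \<Rightarrow> real^4 \<Rightarrow> real^4 \<Rightarrow> real" where
  "det4 u v w x = det (vector [u, v, w, x] :: real^4^4)"

lemma det4_expand: "det4 u v w x =
    u$1 * v$2 * w$3 * x$4 - u$1 * v$2 * w$4 * x$3 - u$1 * v$3 * w$2 * x$4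
  + u$1 * v$3 * w$4 * x$2 + u$1 * v$4 * w$2 * x$3 - u$1 * v$4 * w$3 * x$2
  - u$2 * v$1 * w$3 * x$4 + u$2 * v$1 * w$4 * x$3 + u$2 * v$3 * w$1 * x$4
  - u$2 * v$3 * w$4 * x$1 - u$2 * v$4 * w$1 * x$3 + u$2 * v$4 * w$3 * x$1
  + u$3 * v$1 * w$2 * x$4 - u$3 * v$1 * w$4 * x$2 - u$3 * v$2 * w$1 * x$4
  + u$3 * v$2 * w$4 * x$1 + u$3 * v$4 * w$1 * x$2 - u$3 * v$4 * w$2 * x$1
  - u$4 * v$1 * w$2 * x$3 + u$4 * v$1 * w$3 * x$2 + u$4 * v$2 * w$1 * x$3
  - u$4 * v$2 * w$3 * x$1 - u$4 * v$3 * w$1 * x$2 + u$4 * v$3 * w$2 * x$1"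
  unfolding det4_def det_4 by simp

lemma det4_add1: "det4 (a + b) v w x = det4 a v w x + det4 b v w x"
  and det4_add2: "det4 u (a + b) w x = det4 u a w x + det4 u b w x"
  and det4_add3: "det4 u v (a + b) x = det4 u v a x + det4 u v b x"
  and det4_add4: "det4 u v w (a + b) = det4 u v w a + det4 u v w b"
  and det4_diff1: "det4 (a - b) v w x = det4 a v w x - det4 b v w x"
  and det4_diff2: "det4 u (a - b) w x = det4 u a w x - det4 u b w x"
  and det4_diff3: "det4 u v (a - b) x = det4 u v a x - det4 u v b x"
  and det4_diff4: "det4 u v w (a - b) = det4 u v w a - det4 u v w b"
  and det4_scaleR1: "det4 (c *\<^sub>R a) v w x = c * det4 a v w x"
  and det4_scaleR2: "det4 u (c *\<^sub>R a) w x = c * det4 u a w x"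
  and det4_scaleR3: "det4 u v (c *\<^sub>R a) x = c * det4 u v a x"
  and det4_scaleR4: "det4 u v w (c *\<^sub>R a) = c * det4 u v w a"
  and det4_zero4: "det4 u v w 0 = 0"
  by (simp_all add: det4_expand algebra_simps)

lemmas det4_multilinear = det4_add1 det4_add2 det4_add3 det4_add4
  det4_diff1 det4_diff2 det4_diff3 det4_diff4
  det4_scaleR1 det4_scaleR2 det4_scaleR3 det4_scaleR4 det4_zero4

lemma det4_alternating:
  "det4 u u w x = 0" "det4 u v u x = 0" "det4 u v w u = 0"
  "det4 u v v x = 0" "det4 u v w v = 0" "det4 u v w w = 0"
  by (simp_all add: det4_expand algebra_simps)

lemma det4_swap34: "det4 u v w x = - det4 u v x w"
  by (simp add: det4_expand algebra_simps)

lemma det4_has_real_derivative: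
  assumes "(u has_vector_derivative u') (at t)" "(v has_vector_derivative v') (at t)"
    and "(w has_vector_derivative w') (at t)" "(x has_vector_derivative x') (at t)"
  shows "((\<lambda>t. det4 (u t) (v t) (w t) (x t)) has_real_derivative
     det4 u' (v t) (w t) (x t) + det4 (u t) v' (w t) (x t)
       + det4 (u t) (v t) w' (x t) + det4 (u t) (v t) (w t) x') (at t)"
proof -
  have component: "((\<lambda>t. f t $ i) has_real_derivative f' $ i) (at t)"
    if "(f has_vector_derivative f') (at t)" for f f' and i :: 4
    using bounded_linear.has_vector_derivative[OF bounded_linear_vec_nth that]
    by (simp add: has_real_derivative_iff_has_vector_derivative)
  show ?thesis
    unfolding det4_expand
    by (rule derivative_eq_intros component assms refl)+ (simp add: algebra_simps)
qed

text \<open>The paper's \<open>u \<times> v \<times> w\<close>: the formal determinant with first row \<open>(-e\<^sub>1, e\<^sub>2, e\<^sub>3, e\<^sub>4)\<close>.\<close>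

definition mcross :: "real^4 \<Rightarrow> real^4 \<Rightarrow> real^4 \<Rightarrow> real^4" where
  "mcross u v w = vector [- det4 u v w (axis 1 1), det4 u v w (axis 2 1),
     det4 u v w (axis 3 1), det4 u v w (axis 4 1)]"

lemma mink_mcross: "mink (mcross u v w) x = det4 u v w x"
  by (simp add: mcross_def mink_def det4_expand axis_def algebra_simps)

lemma mink_mcross_self: "mink (mcross u v w) (mcross u v w) = -(
     mink u u * (mink v v * mink w w - mink v w * mink w v)
   - mink u v * (mink v u * mink w w - mink v w * mink w u)
   + mink u w * (mink v u * mink w v - mink v v * mink w u))"
  by (simp add: mink_mcross det4_expand mcross_def mink_def axis_def algebra_simps)

lemma det4_nonzero_orthogonal_imp_zero:
  assumes "det4 a b c e \<noteq> 0"
    and "mink a y = 0" "mink b y = 0" "mink c y = 0" "mink e y = 0"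
  shows "y = 0"
proof -
  define M where "M = (vector [a, b, c, e] :: real^4^4)"
  define z where "z = (vector [- y$1, y$2, y$3, y$4] :: real^4)"
  have "invertible M"
    using assms(1) by (simp add: invertible_det_nz M_def det4_def)
  moreover have "M *v z = 0"
    using assms(2-5)
    by (simp add: M_def z_def matrix_vector_mult_def sum_4 vec_eq_iff forall_4 mink_def)
  ultimately have "z = 0"
    by (metis invertible_def matrix_vector_mul_assoc matrix_vector_mul_lid matrix_vector_mult_0_right)
  then show "y = 0"
    by (simp add: z_def vec_eq_iff forall_4)
qed

lemma pseudo_orthonormal_frame:
  assumes aa: "mink a a = 1" and bb: "mink b b = -1" and cc: "mink c c = 1"
    and ab: "mink a b = 0" and ac: "mink a c = 0" and bc: "mink b c = 0"
  defines "e \<equiv> mcross a b c"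
  shows "mink a e = 0" "mink b e = 0" "mink c e = 0" "mink e e = 1"
    and "x = mink a x *\<^sub>R a - mink b x *\<^sub>R b + mink c x *\<^sub>R c + mink e x *\<^sub>R e"
    and "det4 a b e x = - mink c x"
proof -
  have ba: "mink b a = 0" and ca: "mink c a = 0" and cb: "mink c b = 0"
    using ab ac bc by (simp_all add: mink_commute)
  have ea: "mink e a = 0" and eb: "mink e b = 0" and ec: "mink e c = 0"
    by (simp_all add: e_def mink_mcross det4_alternating)
  then show ae: "mink a e = 0" and be: "mink b e = 0" and ce: "mink c e = 0"
    by (simp_all add: mink_commute)
  show ee: "mink e e = 1"
    unfolding e_def mink_mcross_self using aa bb cc ab ac bc ba ca cb by simp
  show decomposition: "x = mink a x *\<^sub>R a - mink b x *\<^sub>R b + mink c x *\<^sub>R c + mink e x *\<^sub>R e" for x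
  proof -
    define y where "y = x - (mink a x *\<^sub>R a - mink b x *\<^sub>R b + mink c x *\<^sub>R c + mink e x *\<^sub>R e)"
    have "det4 a b c e = 1"
      using ee by (simp add: e_def mink_mcross[symmetric])
    moreover have "mink a y = 0" "mink b y = 0" "mink c y = 0" "mink e y = 0"
      unfolding y_def using aa bb cc ab ac bc ba ca cb ae be ce ea eb ec ee
      by (simp_all add: mink_simps)
    ultimately have "y = 0"
      using det4_nonzero_orthogonal_imp_zero by (metis zero_neq_one)
    then show ?thesis
      by (simp add: y_def)
  qed
  have "det4 a b e c = -1"
    using ee det4_swap34[of a b e c] by (simp add: e_def mink_mcross)
  then show "det4 a b e x = - mink c x"
    by (subst decomposition[of x]) (simp add: det4_multilinear det4_alternating)
qed

section \<open>Calculus on intervals\<close>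

lemma DERIV_constant_on_open_eq_0:
  fixes f :: "real \<Rightarrow> real"
  assumes "(f has_real_derivative l) (at s)" and "open S" "s \<in> S" "\<And>t. t \<in> S \<Longrightarrow> f t = c"
  shows "l = 0"
proof -
  have "((\<lambda>t. c) has_real_derivative l) (at s)"
    using has_field_derivative_transform_within_open[OF assms(1-3)] assms(4) by simp
  then show ?thesis
    using DERIV_const DERIV_unique by blast
qed

lemma DERIV_zero_constant_on:
  fixes f :: "real \<Rightarrow> real"
  assumes "convex S" "\<And>t. t \<in> S \<Longrightarrow> (f has_real_derivative 0) (at t)"
  obtains c where "\<And>t. t \<in> S \<Longrightarrow> f t = c"
  using has_field_derivative_zero_constant[OF assms(1)] assms(2) has_field_derivative_at_within
  by metis

lemma sinh_cosh_solution:
  fixes h g :: "real \<Rightarrow> real"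
  assumes "convex S"
    and h': "\<And>t. t \<in> S \<Longrightarrow> (h has_real_derivative g t) (at t)"
    and g': "\<And>t. t \<in> S \<Longrightarrow> (g has_real_derivative h t) (at t)"
  obtains a b where "\<And>t. t \<in> S \<Longrightarrow> h t = a * cosh t + b * sinh t"
    and "\<And>t. t \<in> S \<Longrightarrow> g t = a * sinh t + b * cosh t"
proof -
  have "((\<lambda>t. h t * cosh t - g t * sinh t) has_real_derivative 0) (at t)" if "t \<in> S" for t
    by (rule h'[OF that] g'[OF that] derivative_eq_intros | simp)+
  then obtain a where a: "\<And>t. t \<in> S \<Longrightarrow> h t * cosh t - g t * sinh t = a"
    using DERIV_zero_constant_on[OF assms(1)] by blast
  have "((\<lambda>t. g t * cosh t - h t * sinh t) has_real_derivative 0) (at t)" if "t \<in> S" for t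
    by (rule h'[OF that] g'[OF that] derivative_eq_intros | simp)+
  then obtain b where b: "\<And>t. t \<in> S \<Longrightarrow> g t * cosh t - h t * sinh t = b"
    using DERIV_zero_constant_on[OF assms(1)] by blast
  show thesis
  proof
    fix t assume t: "t \<in> S"
    have hyperbolic: "cosh t * cosh t - sinh t * sinh t = 1"
      using cosh_square_eq[of t] by (simp add: power2_eq_square)
    have "a * cosh t + b * sinh t = h t * (cosh t * cosh t - sinh t * sinh t)"
      by (simp add: a[OF t, symmetric] b[OF t, symmetric] algebra_simps)
    then show "h t = a * cosh t + b * sinh t"
      by (simp add: hyperbolic)
    have "a * sinh t + b * cosh t = g t * (cosh t * cosh t - sinh t * sinh t)"
      by (simp add: a[OF t, symmetric] b[OF t, symmetric] algebra_simps)
    then show "g t = a * sinh t + b * cosh t"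
      by (simp add: hyperbolic)
  qed
qed

section \<open>The Frenet frame of a timelike curve\<close>

definition binormal_g :: "(nat \<Rightarrow> real \<Rightarrow> real^4) \<Rightarrow> real \<Rightarrow> real^4" where
  "binormal_g d s = mcross (d 0 s) (d 1 s) (normal_g d s)"

locale timelike_dS_curve =
  fixes I :: "real set" and d :: "nat \<Rightarrow> real \<Rightarrow> real^4"
  assumes open_I: "open I" and interval_I: "is_interval I" and nonempty_I: "I \<noteq> {}"
    and timelike: "timelike_unit_dS I d"
    and kappa_pos: "\<And>s. s \<in> I \<Longrightarrow> kappa_g d s > 0"
begin

lemma has_vector_derivative_d:
  assumes "s \<in> I"
  shows "(d 0 has_vector_derivative d 1 s) (at s)" "(d 1 has_vector_derivative d 2 s) (at s)"
    and "(d 2 has_vector_derivative d 3 s) (at s)"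
proof -
  have "(d k has_vector_derivative d (Suc k) s) (at s)" for k
    using timelike assms unfolding timelike_unit_dS_def deriv_family_def by blast
  from this[of 0] this[of 1] this[of 2] show
    "(d 0 has_vector_derivative d 1 s) (at s)" "(d 1 has_vector_derivative d 2 s) (at s)"
    "(d 2 has_vector_derivative d 3 s) (at s)"
    by (simp_all add: eval_nat_numeral)
qed

lemma unit_speed_relations:
  assumes "s \<in> I"
  shows "mink (d 0 s) (d 0 s) = 1" "mink (d 1 s) (d 1 s) = -1" "mink (d 0 s) (d 1 s) = 0"
    and "mink (d 0 s) (d 2 s) = 1" "mink (d 1 s) (d 2 s) = 0"
proof -
  have unit: "mink (d 0 t) (d 0 t) = 1" "mink (d 1 t) (d 1 t) = -1" if "t \<in> I" for t
    using timelike that by (auto simp: timelike_unit_dS_def)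
  have d01: "mink (d 0 t) (d 1 t) = 0" if "t \<in> I" for t
    using DERIV_constant_on_open_eq_0[OF mink_has_real_derivative[OF
        has_vector_derivative_d(1)[OF that] has_vector_derivative_d(1)[OF that]]
        open_I that unit(1)]
    by (simp add: mink_commute)
  show "mink (d 0 s) (d 2 s) = 1"
    using DERIV_constant_on_open_eq_0[OF mink_has_real_derivative[OF
        has_vector_derivative_d(1,2)[OF assms]] open_I assms d01] unit(2)[OF assms] by simp
  show "mink (d 1 s) (d 2 s) = 0"
    using DERIV_constant_on_open_eq_0[OF mink_has_real_derivative[OF
        has_vector_derivative_d(2)[OF assms] has_vector_derivative_d(2)[OF assms]]
        open_I assms unit(2)]
    by (simp add: mink_commute)
  show "mink (d 0 s) (d 0 s) = 1" "mink (d 1 s) (d 1 s) = -1" "mink (d 0 s) (d 1 s) = 0"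
    using unit d01 assms by simp_all
qed

lemma curvature_vector_mink:
  assumes "s \<in> I"
  shows "mink (d 2 s - d 0 s) (d 2 s - d 0 s) = (kappa_g d s)\<^sup>2"
proof -
  have "mink (d 2 s - d 0 s) (d 1 s) = 0"
    using unit_speed_relations[OF assms] by (simp add: mink_simps mink_commute)
  then have "mink (d 2 s - d 0 s) (d 2 s - d 0 s) \<ge> 0"
    using unit_speed_relations(2)[OF assms] by (intro mink_orthogonal_timelike_nonneg) auto
  then show ?thesis
    by (simp add: kappa_g_def mnorm_def)
qed

lemma second_derivative_eq:
  assumes "s \<in> I"
  shows "d 2 s = d 0 s + kappa_g d s *\<^sub>R normal_g d s"
  using kappa_pos[OF assms] by (simp add: normal_g_def)

lemma normal_mink:
  assumes "s \<in> I"
  shows "mink (normal_g d s) (normal_g d s) = 1"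
    and "mink (d 0 s) (normal_g d s) = 0" "mink (d 1 s) (normal_g d s) = 0"
proof -
  have "kappa_g d s \<noteq> 0"
    using kappa_pos[OF assms] by simp
  then show "mink (normal_g d s) (normal_g d s) = 1"
    using curvature_vector_mink[OF assms]
    by (simp add: normal_g_def mink_scaleR_left mink_scaleR_right power2_eq_square)
  show "mink (d 0 s) (normal_g d s) = 0" "mink (d 1 s) (normal_g d s) = 0"
    using unit_speed_relations[OF assms] mink_commute[of "d 1 s" "d 0 s"]
    by (simp_all add: normal_g_def mink_simps)
qed

lemma
  assumes "s \<in> I"
  shows binormal_mink: "mink (d 0 s) (binormal_g d s) = 0" "mink (d 1 s) (binormal_g d s) = 0"
      "mink (normal_g d s) (binormal_g d s) = 0" "mink (binormal_g d s) (binormal_g d s) = 1"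
    and frame_decomposition: "x = mink (d 0 s) x *\<^sub>R d 0 s - mink (d 1 s) x *\<^sub>R d 1 s
      + mink (normal_g d s) x *\<^sub>R normal_g d s + mink (binormal_g d s) x *\<^sub>R binormal_g d s"
    and det4_binormal: "det4 (d 0 s) (d 1 s) (binormal_g d s) x = - mink (normal_g d s) x"
  using pseudo_orthonormal_frame[OF unit_speed_relations(1,2)[OF assms] normal_mink(1)[OF assms]
      unit_speed_relations(3)[OF assms] normal_mink(2,3)[OF assms]]
  unfolding binormal_g_def by simp_all

lemma normal_differentiable:
  assumes "s \<in> I"
  obtains N' where "(normal_g d has_vector_derivative N') (at s)"
proof -
  define v where "v t = d 2 t - d 0 t" for t
  define m where "m t = mink (v t) (v t)" for t
  have v': "(v has_vector_derivative d 3 s - d 1 s) (at s)"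
    unfolding v_def by (intro has_vector_derivative_diff has_vector_derivative_d assms)
  obtain m' where m': "(m has_real_derivative m') (at s)"
    using mink_has_real_derivative[OF v' v'] unfolding m_def by blast
  have m_pos: "m s > 0"
    using curvature_vector_mink[OF assms] kappa_pos[OF assms] by (simp add: m_def v_def)
  obtain r' where "((\<lambda>t. inverse (sqrt (m t))) has_real_derivative r') (at s)"
    using DERIV_inverse_fun[OF DERIV_chain2[OF DERIV_real_sqrt[OF m_pos] m']] m_pos by force
  then have "((\<lambda>t. inverse (sqrt (m t)) *\<^sub>R v t) has_vector_derivative
      inverse (sqrt (m s)) *\<^sub>R (d 3 s - d 1 s) + r' *\<^sub>R v s) (at s)"
    using v' by (rule has_vector_derivative_scaleR)
  moreover have "inverse (sqrt (m t)) *\<^sub>R v t = normal_g d t" if "t \<in> I" for t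
    using curvature_vector_mink[OF that] kappa_pos[OF that]
    by (simp add: normal_g_def m_def v_def divide_inverse)
  ultimately show thesis
    using has_vector_derivative_transform_within_open[OF _ open_I assms] that by blast
qed

lemma kappa_differentiable:
  assumes "s \<in> I" and "(normal_g d has_vector_derivative N') (at s)"
  obtains \<kappa>' where "(kappa_g d has_real_derivative \<kappa>') (at s)"
proof -
  have "((\<lambda>t. mink (d 2 t - d 0 t) (normal_g d t)) has_real_derivative
      mink (d 3 s - d 1 s) (normal_g d s) + mink (d 2 s - d 0 s) N') (at s)"
    by (intro mink_has_real_derivative has_vector_derivative_diff has_vector_derivative_d assms)
  moreover have "mink (d 2 t - d 0 t) (normal_g d t) = kappa_g d t" if "t \<in> I" for t
    using second_derivative_eq[OF that] normal_mink(1)[OF that] by (simp add: mink_scaleR_left)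
  ultimately show thesis
    using has_field_derivative_transform_within_open[OF _ open_I assms(1)] that by blast
qed

lemma third_derivative_eq:
  assumes "s \<in> I" and "(normal_g d has_vector_derivative N') (at s)"
    and "(kappa_g d has_real_derivative \<kappa>') (at s)"
  shows "d 3 s = d 1 s + kappa_g d s *\<^sub>R N' + \<kappa>' *\<^sub>R normal_g d s"
proof -
  have "((\<lambda>t. d 0 t + kappa_g d t *\<^sub>R normal_g d t) has_vector_derivative
      d 1 s + (kappa_g d s *\<^sub>R N' + \<kappa>' *\<^sub>R normal_g d s)) (at s)"
    by (intro has_vector_derivative_add has_vector_derivative_scaleR has_vector_derivative_d assms)
  then have "(d 2 has_vector_derivative d 1 s + (kappa_g d s *\<^sub>R N' + \<kappa>' *\<^sub>R normal_g d s)) (at s)"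
    by (rule has_vector_derivative_transform_within_open[OF _ open_I assms(1)])
      (simp add: second_derivative_eq)
  then show ?thesis
    using has_vector_derivative_d(3)[OF assms(1)] vector_derivative_unique_at
    by (metis add.assoc)
qed

lemma tau_g_eq_det4:
  assumes "s \<in> I" and "(normal_g d has_vector_derivative N') (at s)"
    and "(kappa_g d has_real_derivative \<kappa>') (at s)"
  shows "tau_g d s = det4 (d 0 s) (d 1 s) (normal_g d s) N'"
proof -
  have "det4 (d 0 s) (d 1 s) (d 2 s) (d 3 s)
      = (kappa_g d s)\<^sup>2 * det4 (d 0 s) (d 1 s) (normal_g d s) N'"
    unfolding third_derivative_eq[OF assms] second_derivative_eq[OF assms(1)]
    by (simp add: det4_multilinear det4_alternating power2_eq_square)
  then show ?thesis
    using kappa_pos[OF assms(1)] by (simp add: tau_g_def det4_def)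
qed

lemma normal_frenet:
  assumes "s \<in> I"
  shows "(normal_g d has_vector_derivative kappa_g d s *\<^sub>R d 1 s + tau_g d s *\<^sub>R binormal_g d s) (at s)"
proof -
  obtain N' where N': "(normal_g d has_vector_derivative N') (at s)"
    using normal_differentiable[OF assms] .
  obtain \<kappa>' where \<kappa>': "(kappa_g d has_real_derivative \<kappa>') (at s)"
    using kappa_differentiable[OF assms N'] .
  have "mink (d 1 s) (normal_g d s) + mink (d 0 s) N' = 0"
    using DERIV_constant_on_open_eq_0[OF mink_has_real_derivative[OF
        has_vector_derivative_d(1)[OF assms] N'] open_I assms normal_mink(2)] .
  then have N'_d0: "mink (d 0 s) N' = 0"
    using normal_mink(3)[OF assms] by simp
  have "mink (d 2 s) (normal_g d s) + mink (d 1 s) N' = 0"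
    using DERIV_constant_on_open_eq_0[OF mink_has_real_derivative[OF
        has_vector_derivative_d(2)[OF assms] N'] open_I assms normal_mink(3)] .
  moreover have "mink (d 2 s) (normal_g d s) = kappa_g d s"
    using normal_mink[OF assms] by (simp add: second_derivative_eq[OF assms] mink_simps)
  ultimately have N'_d1: "mink (d 1 s) N' = - kappa_g d s"
    by simp
  have "mink N' (normal_g d s) + mink (normal_g d s) N' = 0"
    using DERIV_constant_on_open_eq_0[OF mink_has_real_derivative[OF N' N'] open_I assms
        normal_mink(1)] .
  then have N'_N: "mink (normal_g d s) N' = 0"
    by (simp add: mink_commute)
  have N'_B: "mink (binormal_g d s) N' = tau_g d s"
    by (simp add: binormal_g_def mink_mcross tau_g_eq_det4[OF assms N' \<kappa>'])
  have "N' = kappa_g d s *\<^sub>R d 1 s + tau_g d s *\<^sub>R binormal_g d s"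
    using frame_decomposition[OF assms, of N'] N'_d0 N'_d1 N'_N N'_B by simp
  then show ?thesis
    using N' by simp
qed

lemma binormal_frenet:
  assumes "s \<in> I"
  shows "((\<lambda>t. mink (binormal_g d t) x) has_real_derivative - tau_g d s * mink (normal_g d s) x) (at s)"
proof -
  have "((\<lambda>t. det4 (d 0 t) (d 1 t) (normal_g d t) x) has_real_derivative
      det4 (d 1 s) (d 1 s) (normal_g d s) x + det4 (d 0 s) (d 2 s) (normal_g d s) x
      + det4 (d 0 s) (d 1 s) (kappa_g d s *\<^sub>R d 1 s + tau_g d s *\<^sub>R binormal_g d s) x
      + det4 (d 0 s) (d 1 s) (normal_g d s) 0) (at s)"
    by (intro det4_has_real_derivative has_vector_derivative_d normal_frenet
        has_vector_derivative_const assms)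
  moreover have "det4 (d 1 s) (d 1 s) (normal_g d s) x + det4 (d 0 s) (d 2 s) (normal_g d s) x
      + det4 (d 0 s) (d 1 s) (kappa_g d s *\<^sub>R d 1 s + tau_g d s *\<^sub>R binormal_g d s) x
      + det4 (d 0 s) (d 1 s) (normal_g d s) 0 = - tau_g d s * mink (normal_g d s) x"
    using det4_binormal[OF assms, of x]
    by (simp add: second_derivative_eq[OF assms] det4_multilinear det4_alternating)
  ultimately show ?thesis
    by (simp add: binormal_g_def mink_mcross)
qed

end

section \<open>Lorentz isometries\<close>

lemma deriv_family_linear_image:
  assumes "linear A" and "deriv_family I d"
  shows "deriv_family I (\<lambda>k t. A (d k t))"
  using assms bounded_linear.has_vector_derivative linear_conv_bounded_linear
  unfolding deriv_family_def by blast

lemma deriv_family_unique: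
  assumes "open I" and "deriv_family I d" and "deriv_family I e"
    and "\<And>t. t \<in> I \<Longrightarrow> d 0 t = e 0 t" and "t \<in> I"
  shows "d k t = e k t"
  using \<open>t \<in> I\<close>
proof (induction k arbitrary: t)
  case 0
  then show ?case
    using assms(4) by blast
next
  case (Suc k)
  have "(d k has_vector_derivative d (Suc k) t) (at t)"
    using assms(2) Suc.prems unfolding deriv_family_def by blast
  then have "(e k has_vector_derivative d (Suc k) t) (at t)"
    using has_vector_derivative_transform_within_open[OF _ assms(1) Suc.prems] Suc.IH by blast
  moreover have "(e k has_vector_derivative e (Suc k) t) (at t)"
    using assms(3) Suc.prems unfolding deriv_family_def by blast
  ultimately show ?case
    using vector_derivative_unique_at by blast
qed

lemma lorentz_iso_surj:
  assumes "lorentz_iso A"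
  shows "surj A"
proof -
  have "linear A" and preserves: "\<And>x y. mink (A x) (A y) = mink x y"
    using assms by (auto simp: lorentz_iso_def)
  moreover have "x = 0" if "A x = 0" for x
    using preserves[of x] that by (intro mink_nondegenerate) (simp add: mink_zero_left)
  ultimately show ?thesis
    using linear_injective_0 linear_injective_imp_surjective by blast
qed

lemma normal_g_lorentz_iso:
  assumes "lorentz_iso A" and "\<And>k. e k t = A (d k t)"
  shows "normal_g e t = A (normal_g d t)"
proof -
  have lin: "linear A" and "\<And>x y. mink (A x) (A y) = mink x y"
    using assms(1) by (auto simp: lorentz_iso_def)
  then show ?thesis
    by (simp add: assms(2) kappa_g_def mnorm_def normal_g_def linear_diff[OF lin, symmetric]
        linear_cmul[OF lin])
qed

section \<open>Rectifying points\<close>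

text \<open>The geodesic condition of \<^const>\<open>timelike_rectifying\<close>, simplified using
  \<open>\<langle>\<alpha>, N\<rangle> = 0\<close>; the condition \<open>\<plusminus>p \<notin> \<alpha>\<close> is then automatic
  (\<open>rectifying_point_not_on_curve\<close>).\<close>

definition rectifying_point :: "real set \<Rightarrow> (nat \<Rightarrow> real \<Rightarrow> real^4) \<Rightarrow> real^4 \<Rightarrow> bool" where
  "rectifying_point I d p \<longleftrightarrow> mink p p = 1 \<and> (\<forall>s\<in>I. mink p (normal_g d s) = 0)"

context timelike_dS_curve
begin

lemma rectifying_point_has_derivative:
  assumes "rectifying_point I d p" and "s \<in> I"
  shows "((\<lambda>t. mink p (d 0 t)) has_real_derivative mink p (d 1 s)) (at s)"
    and "((\<lambda>t. mink p (d 1 t)) has_real_derivative mink p (d 0 s)) (at s)"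
proof -
  show "((\<lambda>t. mink p (d 0 t)) has_real_derivative mink p (d 1 s)) (at s)"
    using mink_has_real_derivative[OF has_vector_derivative_const[of p]
        has_vector_derivative_d(1)[OF assms(2)]]
    by (simp add: mink_zero_left)
  have "mink p (d 2 s) = mink p (d 0 s)"
    using assms by (simp add: rectifying_point_def second_derivative_eq mink_simps)
  then show "((\<lambda>t. mink p (d 1 t)) has_real_derivative mink p (d 0 s)) (at s)"
    using mink_has_real_derivative[OF has_vector_derivative_const[of p]
        has_vector_derivative_d(2)[OF assms(2)]]
    by (simp add: mink_zero_left)
qed

lemma rectifying_point_binormal_const:
  assumes "rectifying_point I d p"
  obtains K where "\<And>s. s \<in> I \<Longrightarrow> mink p (binormal_g d s) = K"
proof -
  have "((\<lambda>t. mink (binormal_g d t) p) has_real_derivative 0) (at s)" if "s \<in> I" for s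
    using binormal_frenet[OF that, of p] assms that by (simp add: rectifying_point_def mink_commute)
  then obtain K where "\<And>s. s \<in> I \<Longrightarrow> mink (binormal_g d s) p = K"
    using DERIV_zero_constant_on[OF is_interval_convex[OF interval_I]] by blast
  then show thesis
    using that by (metis mink_commute)
qed

lemma rectifying_point_frenet_relation:
  assumes "rectifying_point I d p" and "s \<in> I"
  shows "kappa_g d s * mink p (d 1 s) + tau_g d s * mink p (binormal_g d s) = 0"
proof -
  have "(\<And>t. t \<in> I \<Longrightarrow> mink p (normal_g d t) = 0)"
    using assms(1) by (simp add: rectifying_point_def)
  then show ?thesis
    using DERIV_constant_on_open_eq_0[OF mink_has_real_derivative[OF has_vector_derivative_const
        normal_frenet[OF assms(2)]] open_I assms(2)]
    by (simp add: mink_simps)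
qed

lemma rectifying_point_norm:
  assumes "rectifying_point I d p" and "s \<in> I"
  shows "(mink p (d 0 s))\<^sup>2 - (mink p (d 1 s))\<^sup>2 + (mink p (binormal_g d s))\<^sup>2 = 1"
proof -
  have "1 = mink p p"
    using assms(1) by (simp add: rectifying_point_def)
  also have "\<dots> = mink p (mink (d 0 s) p *\<^sub>R d 0 s - mink (d 1 s) p *\<^sub>R d 1 s
      + mink (normal_g d s) p *\<^sub>R normal_g d s + mink (binormal_g d s) p *\<^sub>R binormal_g d s)"
    by (rule arg_cong[where f = "mink p"], rule frame_decomposition[OF assms(2)])
  also have "\<dots> = (mink p (d 0 s))\<^sup>2 - (mink p (d 1 s))\<^sup>2 + (mink p (binormal_g d s))\<^sup>2"
    using assms mink_commute[of "d 0 s" p] mink_commute[of "d 1 s" p]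
      mink_commute[of "normal_g d s" p] mink_commute[of "binormal_g d s" p]
    by (simp add: rectifying_point_def mink_simps power2_eq_square)
  finally show ?thesis ..
qed

lemma rectifying_point_binormal_nonzero:
  assumes "rectifying_point I d p" and "s \<in> I"
  shows "mink p (binormal_g d s) \<noteq> 0"
proof
  assume "mink p (binormal_g d s) = 0"
  then have B: "mink p (binormal_g d t) = 0" if "t \<in> I" for t
    using rectifying_point_binormal_const[OF assms(1)] assms(2) that by metis
  then have T: "mink p (d 1 t) = 0" if "t \<in> I" for t
    using rectifying_point_frenet_relation[OF assms(1) that] kappa_pos[OF that] that by simp
  have "mink p (d 0 s) = 0"
    using DERIV_constant_on_open_eq_0[OF rectifying_point_has_derivative(2)[OF assms] open_I
        assms(2) T] .
  then show False
    using rectifying_point_norm[OF assms] T B assms(2) by simp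
qed

lemma rectifying_point_imp_ratio:
  assumes "rectifying_point I d p"
  shows "\<exists>\<mu>1 \<mu>2 s0. \<mu>2\<^sup>2 - \<mu>1\<^sup>2 < 1 \<and>
    (\<forall>s\<in>I. tau_g d s / kappa_g d s = \<mu>1 * sinh (s + s0) + \<mu>2 * cosh (s + s0))"
proof -
  obtain s1 where s1: "s1 \<in> I"
    using nonempty_I by blast
  obtain K where K: "\<And>s. s \<in> I \<Longrightarrow> mink p (binormal_g d s) = K"
    using rectifying_point_binormal_const[OF assms] by blast
  have "K \<noteq> 0"
    using rectifying_point_binormal_nonzero[OF assms s1] K[OF s1] by simp
  obtain a b where h: "\<And>t. t \<in> I \<Longrightarrow> mink p (d 0 t) = a * cosh t + b * sinh t"
    and g: "\<And>t. t \<in> I \<Longrightarrow> mink p (d 1 t) = a * sinh t + b * cosh t"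
    using sinh_cosh_solution[OF is_interval_convex[OF interval_I]
        rectifying_point_has_derivative[OF assms]] by blast
  have "(a * cosh s1 + b * sinh s1)\<^sup>2 - (a * sinh s1 + b * cosh s1)\<^sup>2
      = (a\<^sup>2 - b\<^sup>2) * ((cosh s1)\<^sup>2 - (sinh s1)\<^sup>2)"
    by (simp add: power2_eq_square algebra_simps)
  then have "a\<^sup>2 - b\<^sup>2 = 1 - K\<^sup>2"
    using rectifying_point_norm[OF assms s1] h[OF s1] g[OF s1] K[OF s1] cosh_square_eq[of s1]
    by simp
  show ?thesis
  proof (intro exI conjI ballI)
    have "(- b / K)\<^sup>2 - (- a / K)\<^sup>2 = 1 - 1 / K\<^sup>2"
      using \<open>K \<noteq> 0\<close> \<open>a\<^sup>2 - b\<^sup>2 = 1 - K\<^sup>2\<close> by (simp add: field_simps)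
    then show "(- b / K)\<^sup>2 - (- a / K)\<^sup>2 < 1"
      using \<open>K \<noteq> 0\<close> by simp
  next
    fix s assume "s \<in> I"
    then show "tau_g d s / kappa_g d s = - a / K * sinh (s + 0) + - b / K * cosh (s + 0)"
      using rectifying_point_frenet_relation[OF assms \<open>s \<in> I\<close>] kappa_pos[OF \<open>s \<in> I\<close>]
        g[OF \<open>s \<in> I\<close>] K[OF \<open>s \<in> I\<close>] \<open>K \<noteq> 0\<close>
      by (simp add: field_simps)
  qed
qed

lemma binormal_combination_constant:
  fixes f f' :: "real \<Rightarrow> real"
  assumes f: "\<And>t. t \<in> I \<Longrightarrow> (f has_real_derivative f' t) (at t)"
    and f': "\<And>t. t \<in> I \<Longrightarrow> (f' has_real_derivative f t) (at t)"
    and tau: "\<And>t. t \<in> I \<Longrightarrow> tau_g d t = f t * kappa_g d t"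
    and "s \<in> I" and "t \<in> I"
  shows "binormal_g d t + f t *\<^sub>R d 1 t - f' t *\<^sub>R d 0 t
    = binormal_g d s + f s *\<^sub>R d 1 s - f' s *\<^sub>R d 0 s"
proof -
  define P where "P t = binormal_g d t + f t *\<^sub>R d 1 t - f' t *\<^sub>R d 0 t" for t
  have P_mink:
    "mink (P t) x = mink (binormal_g d t) x + f t * mink (d 1 t) x - f' t * mink (d 0 t) x" for t x
    by (simp add: P_def mink_simps)
  have P_deriv: "((\<lambda>t. mink (P t) x) has_real_derivative 0) (at u)" if "u \<in> I" for u x
  proof -
    have d0: "((\<lambda>t. mink (d 0 t) x) has_real_derivative mink (d 1 u) x) (at u)"
      using mink_has_real_derivative[OF has_vector_derivative_d(1)[OF that]
          has_vector_derivative_const]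
      by (simp add: mink_zero_right)
    have d1: "((\<lambda>t. mink (d 1 t) x) has_real_derivative mink (d 2 u) x) (at u)"
      using mink_has_real_derivative[OF has_vector_derivative_d(2)[OF that]
          has_vector_derivative_const]
      by (simp add: mink_zero_right)
    have "((\<lambda>t. mink (binormal_g d t) x + f t * mink (d 1 t) x - f' t * mink (d 0 t) x)
        has_real_derivative - tau_g d u * mink (normal_g d u) x
          + (f' u * mink (d 1 u) x + mink (d 2 u) x * f u)
          - (f u * mink (d 0 u) x + mink (d 1 u) x * f' u)) (at u)"
      by (intro DERIV_add DERIV_diff DERIV_mult binormal_frenet that f f' d0 d1)
    then show ?thesis
      unfolding P_mink using tau[OF that] mink_commute[of "normal_g d u" x]
      by (simp add: second_derivative_eq[OF that] mink_simps algebra_simps)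
  qed
  have "mink (P t) x = mink (P s) x" for x
  proof -
    obtain k where "\<And>u. u \<in> I \<Longrightarrow> mink (P u) x = k"
      using DERIV_zero_constant_on[OF is_interval_convex[OF interval_I] P_deriv] by blast
    then show ?thesis
      using \<open>s \<in> I\<close> \<open>t \<in> I\<close> by simp
  qed
  then have "P t - P s = 0"
    by (intro mink_nondegenerate) (simp add: mink_diff_left)
  then show ?thesis
    by (simp add: P_def)
qed

lemma ratio_imp_rectifying_point:
  assumes "\<mu>2\<^sup>2 - \<mu>1\<^sup>2 < 1"
    and ratio: "\<And>s. s \<in> I \<Longrightarrow> tau_g d s / kappa_g d s = \<mu>1 * sinh (s + s0) + \<mu>2 * cosh (s + s0)"
  obtains p where "rectifying_point I d p"
proof -
  define f where "f t = \<mu>1 * sinh (t + s0) + \<mu>2 * cosh (t + s0)" for t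
  define f' where "f' t = \<mu>1 * cosh (t + s0) + \<mu>2 * sinh (t + s0)" for t
  have f: "(f has_real_derivative f' t) (at t)" and f': "(f' has_real_derivative f t) (at t)" for t
    unfolding f_def f'_def by (auto intro!: derivative_eq_intros)
  have tau: "tau_g d t = f t * kappa_g d t" if "t \<in> I" for t
    using ratio[OF that] kappa_pos[OF that] by (simp add: f_def field_simps)
  obtain s1 where s1: "s1 \<in> I"
    using nonempty_I by blast
  define c where "c = 1 / sqrt (1 + \<mu>1\<^sup>2 - \<mu>2\<^sup>2)"
  define p where "p = c *\<^sub>R (binormal_g d s1 + f s1 *\<^sub>R d 1 s1 - f' s1 *\<^sub>R d 0 s1)"
  show thesis
  proof (rule that, unfold rectifying_point_def, intro conjI ballI)
    have "mink p p = c\<^sup>2 * (1 + ((f' s1)\<^sup>2 - (f s1)\<^sup>2))"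
      using unit_speed_relations[OF s1] binormal_mink[OF s1] mink_commute[of "d 0 s1" "d 1 s1"]
        mink_commute[of "d 0 s1" "binormal_g d s1"] mink_commute[of "d 1 s1" "binormal_g d s1"]
      by (simp add: p_def mink_simps power2_eq_square algebra_simps)
    also have "(f' s1)\<^sup>2 - (f s1)\<^sup>2 = (\<mu>1\<^sup>2 - \<mu>2\<^sup>2) * ((cosh (s1 + s0))\<^sup>2 - (sinh (s1 + s0))\<^sup>2)"
      by (simp add: f_def f'_def power2_eq_square algebra_simps)
    also have "\<dots> = \<mu>1\<^sup>2 - \<mu>2\<^sup>2"
      using cosh_square_eq[of "s1 + s0"] by simp
    finally show "mink p p = 1"
      using assms(1) by (simp add: c_def power_divide add_diff_eq)
  next
    fix s assume "s \<in> I"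
    have "p = c *\<^sub>R (binormal_g d s + f s *\<^sub>R d 1 s - f' s *\<^sub>R d 0 s)"
      unfolding p_def using binormal_combination_constant[OF f f' tau \<open>s \<in> I\<close> s1] by simp
    then show "mink p (normal_g d s) = 0"
      using normal_mink[OF \<open>s \<in> I\<close>] binormal_mink(3)[OF \<open>s \<in> I\<close>]
        mink_commute[of "binormal_g d s" "normal_g d s"]
      by (simp add: mink_simps)
  qed
qed

lemma rectifying_point_not_on_curve:
  assumes "rectifying_point I d p" and "s \<in> I"
  shows "d 0 s \<noteq> p" and "d 0 s \<noteq> - p"
  using rectifying_point_binormal_nonzero[OF assms] binormal_mink(1)[OF assms(2)]
  by (auto simp: mink_minus_left)

lemma rectifying_point_imp_timelike_rectifying:
  assumes "rectifying_point I d p"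
  shows "timelike_rectifying I (d 0)"
  unfolding timelike_rectifying_def
proof (intro exI conjI ballI)
  show "timelike_unit_dS I d" "\<And>s. s \<in> I \<Longrightarrow> kappa_g d s > 0"
    by (fact timelike kappa_pos)+
  show "mink p p = 1"
    using assms by (simp add: rectifying_point_def)
  fix s assume "s \<in> I"
  show "d 0 s \<noteq> p" "d 0 s \<noteq> - p"
    by (rule rectifying_point_not_on_curve[OF assms \<open>s \<in> I\<close>])+
  show "mink (geod_tangent p (d 0 s)) (normal_g d s) = 0"
    using assms \<open>s \<in> I\<close> normal_mink(2)[OF \<open>s \<in> I\<close>]
    by (simp add: rectifying_point_def geod_tangent_def mink_simps)
qed simp

lemma congruent_imp_rectifying_point:
  assumes "congruent_to_rectifying I (d 0)"
  obtains q where "rectifying_point I d q"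
proof -
  obtain A e p where A: "lorentz_iso A" and e0: "e 0 = A \<circ> d 0" and e: "timelike_unit_dS I e"
    and p: "mink p p = 1"
    and geodesic: "\<And>s. s \<in> I \<Longrightarrow> mink (geod_tangent p (A (d 0 s))) (normal_g e s) = 0"
    using assms unfolding congruent_to_rectifying_def timelike_rectifying_def by auto
  have iso: "\<And>x y. mink (A x) (A y) = mink x y"
    using A by (simp add: lorentz_iso_def)
  have "e k t = A (d k t)" if "t \<in> I" for k t
    using deriv_family_unique[OF open_I _ deriv_family_linear_image _ that] e0 e timelike A
    by (simp add: timelike_unit_dS_def lorentz_iso_def)
  then have normal_e: "normal_g e s = A (normal_g d s)" if "s \<in> I" for s
    using normal_g_lorentz_iso[OF A] that by blast
  obtain q where "A q = p"
    using lorentz_iso_surj[OF A] by (metis surjD)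
  show thesis
  proof (rule that, unfold rectifying_point_def, intro conjI ballI)
    show "mink q q = 1"
      using iso[of q q] p \<open>A q = p\<close> by simp
    fix s assume "s \<in> I"
    then have "mink p (A (normal_g d s)) = 0"
      using geodesic[OF \<open>s \<in> I\<close>] normal_e iso[of "d 0 s" "normal_g d s"] normal_mink(2)
      by (simp add: geod_tangent_def mink_simps)
    then show "mink q (normal_g d s) = 0"
      using iso \<open>A q = p\<close> by metis
  qed
qed

end

theorem theorem3p2:
  fixes I :: "real set" and d :: "nat \<Rightarrow> real \<Rightarrow> real^4"
  assumes "open I" and "is_interval I" and "I \<noteq> {}"
    and "timelike_unit_dS I d"
    and "\<forall>s\<in>I. kappa_g d s > 0"
    and "\<forall>s\<in>I. tau_g d s \<noteq> 0"
  shows "congruent_to_rectifying I (d 0) \<longleftrightarrow>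
    (\<exists>\<mu>1 \<mu>2 s0. \<mu>2^2 - \<mu>1^2 < 1 \<and>
       (\<forall>s\<in>I. tau_g d s / kappa_g d s = \<mu>1 * sinh (s + s0) + \<mu>2 * cosh (s + s0)))"
proof -
  interpret timelike_dS_curve I d
    using assms(1-5) by unfold_locales auto
  show ?thesis
  proof
    assume "congruent_to_rectifying I (d 0)"
    then obtain q where "rectifying_point I d q"
      by (rule congruent_imp_rectifying_point)
    then show "\<exists>\<mu>1 \<mu>2 s0. \<mu>2^2 - \<mu>1^2 < 1 \<and>
       (\<forall>s\<in>I. tau_g d s / kappa_g d s = \<mu>1 * sinh (s + s0) + \<mu>2 * cosh (s + s0))"
      by (rule rectifying_point_imp_ratio)
  next
    assume "\<exists>\<mu>1 \<mu>2 s0. \<mu>2^2 - \<mu>1^2 < 1 \<and>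
       (\<forall>s\<in>I. tau_g d s / kappa_g d s = \<mu>1 * sinh (s + s0) + \<mu>2 * cosh (s + s0))"
    then obtain p where "rectifying_point I d p"
      using ratio_imp_rectifying_point by blast
    then have "timelike_rectifying I (id \<circ> d 0)"
      by (simp add: rectifying_point_imp_timelike_rectifying)
    moreover have "lorentz_iso id"
      by (simp add: lorentz_iso_def linear_id)
    ultimately show "congruent_to_rectifying I (d 0)"
      unfolding congruent_to_rectifying_def by blast
  qed
qed

end
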